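(* Consider the model described in the context and suppose the Lipschitz assumption holds. Then for every $t\in\mathbb N_T$ there exists a constant $K_t>0$ such that for all $z_1,z_2\in\Delta(\mathcal X)$, $$|\hat V_t(z_1)-\hat V_t(z_2)|\le K_t\|z_1-z_2\|_\infty.$$
   Context: Let $T\in\mathbb N$, $\mathbb N_T=\{1,\dots,T\}$, and let $\mathcal X,\mathcal U,\mathcal W$ be finite sets. Let $\mathcal I(\mathcal X)=[0,1]^{\mathcal X}$ and $\Delta(\mathcal X)$ the set of probability vectors on $\mathcal X$. For each $t$ let $f_t:\mathcal X\times\mathcal U\times\mathcal W\times\mathcal I(\mathcal X)\to\mathcal X$, let $\mathbb P(w_t=\cdot)$ be a probability law on $\mathcal W$, and define transition probabilities $\mathbb P(y\mid x,u,z)=\sum_{w\in\mathcal W}\mathbb 1(f_t(x,u,w,z)=y)\,\mathbb P(w_t=w)$; let $\ell_t:\mathcal X\times\mathcal U\times\mathcal I(\mathcal X)\to\mathbb R_{\ge0}$ be cost functions. Lipschitz assumption: there exist $K^1_t,K^2_t>0$ with $|\mathbb P(y|x,u,z_1)-\mathbb P(y|x,u,z_2)|\le K^1_t\|z_1-z_2\|_\infty$ and $|\ell_t(x,u,z_1)-\ell_t(x,u,z_2)|\le K^2_t\|z_1-z_2\|_\infty$ for all $x,y,u$ and $z_1,z_2\in\mathcal I(\mathcal X)$. $\mathcal G$ is the set of all maps $\gamma:\mathcal X\to\mathcal U$. Define $\hat f_t(z,\gamma)(y)=\sum_x z(x)\mathbb P(y|x,\gamma(x),z)$, $\hat c_t(z,\gamma)=\sum_x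 z(x)\ell_t(x,\gamma(x),z)$, and $\hat V_t:\Delta(\mathcal X)\to\mathbb R$ by $\hat V_{T+1}\equiv0$, $\hat V_t(z)=\min_{\gamma\in\mathcal G}\big(\hat c_t(z,\gamma)+\hat V_{t+1}(\hat f_t(z,\gamma))\big)$, $t=T,\dots,1$. *)

theory Defs
  imports Main Complex_Main
begin

text \<open>The finite sets X, U, W are finite types 'x, 'u, 'w.
  f :: time => x => u => w => (x => real) => x   (dynamics f_t)
  pw :: time => w => real                          (law of w_t)
  l :: time => x => u => (x => real) => real      (cost l_t)\<close>

definition sup_norm :: "('x::finite \<Rightarrow> real) \<Rightarrow> real" where
  "sup_norm z = Max (range (\<lambda>x. \<bar>z x\<bar>))"

definition Ibox :: "('x \<Rightarrow> real) set" where
  "Ibox = {z. \<forall>x. 0 \<le> z x \<and> z x \<le> 1}"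

definition Simplex :: "('x::finite \<Rightarrow> real) set" where
  "Simplex = {z. (\<forall>x. 0 \<le> z x) \<and> sum z UNIV = 1}"

definition Ptrans ::
  "(nat \<Rightarrow> 'x \<Rightarrow> 'u \<Rightarrow> 'w::finite \<Rightarrow> ('x \<Rightarrow> real) \<Rightarrow> 'x) \<Rightarrow> (nat \<Rightarrow> 'w \<Rightarrow> real)
   \<Rightarrow> nat \<Rightarrow> 'x \<Rightarrow> 'x \<Rightarrow> 'u \<Rightarrow> ('x \<Rightarrow> real) \<Rightarrow> real" where
  "Ptrans f pw t y x u z = (\<Sum>w\<in>UNIV. (if f t x u w z = y then 1 else 0) * pw t w)"

definition fhat ::
  "(nat \<Rightarrow> 'x::finite \<Rightarrow> 'u \<Rightarrow> 'w::finite \<Rightarrow> ('x \<Rightarrow> real) \<Rightarrow> 'x) \<Rightarrow> (nat \<Rightarrow> 'w \<Rightarrow> real)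
   \<Rightarrow> nat \<Rightarrow> ('x \<Rightarrow> real) \<Rightarrow> ('x \<Rightarrow> 'u) \<Rightarrow> ('x \<Rightarrow> real)" where
  "fhat f pw t z \<gamma> = (\<lambda>y. \<Sum>x\<in>UNIV. z x * Ptrans f pw t y x (\<gamma> x) z)"

definition chat ::
  "(nat \<Rightarrow> 'x::finite \<Rightarrow> 'u \<Rightarrow> ('x \<Rightarrow> real) \<Rightarrow> real)
   \<Rightarrow> nat \<Rightarrow> ('x \<Rightarrow> real) \<Rightarrow> ('x \<Rightarrow> 'u) \<Rightarrow> real" where
  "chat l t z \<gamma> = (\<Sum>x\<in>UNIV. z x * l t x (\<gamma> x) z)"

text \<open>Backward recursion: Vrec n t z is the value with n stages remaining starting at time t.\<close>
primrec Vrec ::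
  "(nat \<Rightarrow> 'x::finite \<Rightarrow> 'u::finite \<Rightarrow> 'w::finite \<Rightarrow> ('x \<Rightarrow> real) \<Rightarrow> 'x) \<Rightarrow> (nat \<Rightarrow> 'w \<Rightarrow> real)
   \<Rightarrow> (nat \<Rightarrow> 'x \<Rightarrow> 'u \<Rightarrow> ('x \<Rightarrow> real) \<Rightarrow> real)
   \<Rightarrow> nat \<Rightarrow> nat \<Rightarrow> ('x \<Rightarrow> real) \<Rightarrow> real" where
  "Vrec f pw l 0 t z = 0"
| "Vrec f pw l (Suc n) t z =
     Min (range (\<lambda>\<gamma>. chat l t z \<gamma> + Vrec f pw l n (Suc t) (fhat f pw t z \<gamma>)))"

definition Vhat ::
  "(nat \<Rightarrow> 'x::finite \<Rightarrow> 'u::finite \<Rightarrow> 'w::finite \<Rightarrow> ('x \<Rightarrow> real) \<Rightarrow> 'x) \<Rightarrow> (nat \<Rightarrow> 'w \<Rightarrow> real)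
   \<Rightarrow> (nat \<Rightarrow> 'x \<Rightarrow> 'u \<Rightarrow> ('x \<Rightarrow> real) \<Rightarrow> real)
   \<Rightarrow> nat \<Rightarrow> nat \<Rightarrow> ('x \<Rightarrow> real) \<Rightarrow> real" where
  "Vhat f pw l T t = Vrec f pw l (T + 1 - t) t"

lemma Vhat_last: "Vhat f pw l T (T+1) z = 0"
  by (simp add: Vhat_def)

lemma Vhat_step:
  assumes "t \<le> T"
  shows "Vhat f pw l T t z =
     Min (range (\<lambda>\<gamma>. chat l t z \<gamma> + Vhat f pw l T (Suc t) (fhat f pw t z \<gamma>)))"
proof -
  have "T + 1 - t = Suc (T + 1 - Suc t)" using assms by simp
  then show ?thesis by (simp add: Vhat_def)
qed

end

theory Submission
  imports Defs
begin

text \<open>The Bellman operator preserves Lipschitz continuity on the simplex. The stage cost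
  \<open>chat\<close> and each coordinate of the mean-field dynamics \<open>fhat\<close> are averages
  \<open>\<Sum>x. z x * g z x\<close> with \<open>g\<close> bounded and Lipschitz, hence Lipschitz in \<open>z\<close>;
  \<open>fhat\<close> maps the simplex into itself, so composing with a Lipschitz value function
  stays Lipschitz; and a pointwise minimum over the finite set of decision rules
  inherits a common Lipschitz constant. Backward induction from \<open>Vhat (T+1) = 0\<close> concludes.\<close>

definition sup_lipschitz_on ::
  "real \<Rightarrow> ('x::finite \<Rightarrow> real) set \<Rightarrow> (('x \<Rightarrow> real) \<Rightarrow> real) \<Rightarrow> bool" where
  "sup_lipschitz_on K S g \<longleftrightarrow>
     (\<forall>z1\<in>S. \<forall>z2\<in>S. \<bar>g z1 - g z2\<bar> \<le> K * sup_norm (z1 - z2))"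

lemma abs_le_sup_norm: "\<bar>z x\<bar> \<le> sup_norm (z::'x::finite \<Rightarrow> real)"
  unfolding sup_norm_def by (rule Max_ge) auto

lemma sup_norm_le: "(\<And>x. \<bar>z x\<bar> \<le> B) \<Longrightarrow> sup_norm (z::'x::finite \<Rightarrow> real) \<le> B"
  unfolding sup_norm_def by (subst Max_le_iff) auto

lemma sup_norm_nonneg: "0 \<le> sup_norm (z::'x::finite \<Rightarrow> real)"
  using abs_le_sup_norm[of z undefined] by linarith

lemma sup_norm_le_1_if_Ibox: "z \<in> Ibox \<Longrightarrow> sup_norm (z::'x::finite \<Rightarrow> real) \<le> 1"
  by (rule sup_norm_le) (auto simp: Ibox_def)

lemma Simplex_subset_Ibox: "Simplex \<subseteq> Ibox"
proof
  fix z :: "'x::finite \<Rightarrow> real" assume z: "z \<in> Simplex"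
  have "z x \<le> 1" for x
    using z member_le_sum[of x UNIV z] by (auto simp: Simplex_def)
  with z show "z \<in> Ibox" by (auto simp: Simplex_def Ibox_def)
qed

lemma sup_lipschitz_on_mono:
  "sup_lipschitz_on K S g \<Longrightarrow> K \<le> K' \<Longrightarrow> sup_lipschitz_on K' S g"
  unfolding sup_lipschitz_on_def
  using mult_right_mono[OF _ sup_norm_nonneg] by (blast intro: order_trans)

lemma abs_le_if_sup_lipschitz_on_Ibox:
  assumes "sup_lipschitz_on K Ibox g" "z \<in> Ibox"
  shows "\<bar>g z\<bar> \<le> \<bar>g (\<lambda>_. 0)\<bar> + \<bar>K\<bar>"
proof -
  have "(\<lambda>_. 0) \<in> Ibox" by (simp add: Ibox_def)
  with assms have "\<bar>g z - g (\<lambda>_. 0)\<bar> \<le> K * sup_norm (z - (\<lambda>_. 0))"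
    unfolding sup_lipschitz_on_def by blast
  also have "\<dots> \<le> \<bar>K\<bar> * 1"
    using sup_norm_le_1_if_Ibox[OF assms(2)] sup_norm_nonneg[of z]
    by (intro mult_mono) (auto simp: fun_diff_def)
  finally show ?thesis by linarith
qed

lemma Ptrans_nonneg: "(\<And>w. 0 \<le> pw t w) \<Longrightarrow> 0 \<le> Ptrans f pw t y x u z"
  unfolding Ptrans_def by (intro sum_nonneg) auto

lemma sum_Ptrans:
  fixes f :: "nat \<Rightarrow> 'x::finite \<Rightarrow> 'u \<Rightarrow> 'w::finite \<Rightarrow> ('x \<Rightarrow> real) \<Rightarrow> 'x"
  shows "(\<Sum>y\<in>UNIV. Ptrans f pw t y x u z) = (\<Sum>w\<in>UNIV. pw t w)"
proof -
  have "(\<Sum>y\<in>UNIV. Ptrans f pw t y x u z)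
      = (\<Sum>w\<in>UNIV. \<Sum>y\<in>UNIV. if f t x u w z = y then pw t w else 0)"
    unfolding Ptrans_def by (subst sum.swap) (intro sum.cong refl, simp)
  then show ?thesis by simp
qed

lemma Ptrans_le_1:
  fixes f :: "nat \<Rightarrow> 'x::finite \<Rightarrow> 'u \<Rightarrow> 'w::finite \<Rightarrow> ('x \<Rightarrow> real) \<Rightarrow> 'x"
  assumes "\<And>w. 0 \<le> pw t w" "(\<Sum>w\<in>UNIV. pw t w) = 1"
  shows "Ptrans f pw t y x u z \<le> 1"
proof -
  have "Ptrans f pw t y x u z \<le> (\<Sum>y\<in>UNIV. Ptrans f pw t y x u z)"
    by (rule member_le_sum) (auto intro: Ptrans_nonneg assms(1))
  then show ?thesis by (simp add: sum_Ptrans assms(2))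
qed

lemma fhat_in_Simplex:
  assumes "\<And>w. 0 \<le> pw t w" "(\<Sum>w\<in>UNIV. pw t w) = 1" "z \<in> Simplex"
  shows "fhat f pw t z \<gamma> \<in> Simplex"
proof -
  have "\<forall>y. 0 \<le> fhat f pw t z \<gamma> y"
    using assms(3) Ptrans_nonneg[of pw t, OF assms(1)]
    by (auto simp: fhat_def Simplex_def intro!: sum_nonneg mult_nonneg_nonneg)
  moreover have "sum (fhat f pw t z \<gamma>) UNIV = (\<Sum>x\<in>UNIV. z x)"
    unfolding fhat_def
    by (subst sum.swap) (simp add: sum_distrib_left[symmetric] sum_Ptrans assms(2))
  ultimately show ?thesis using assms(3) by (simp add: Simplex_def)
qed

lemma Min_range_diff_le:
  fixes g1 g2 :: "'a::finite \<Rightarrow> real"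
  assumes "\<And>a. \<bar>g1 a - g2 a\<bar> \<le> B"
  shows "\<bar>Min (range g1) - Min (range g2)\<bar> \<le> B"
proof -
  have "Min (range g1) \<in> range g1" by (rule Min_in) auto
  then obtain a where a: "Min (range g1) = g1 a" by blast
  have "Min (range g2) \<in> range g2" by (rule Min_in) auto
  then obtain b where b: "Min (range g2) = g2 b" by blast
  have "Min (range g1) \<le> g1 b" "Min (range g2) \<le> g2 a" by (rule Min_le; simp)+
  with assms[of a] assms[of b] show ?thesis by (auto simp: a b abs_le_iff)
qed

lemma weighted_sum_diff_le:
  fixes z1 z2 :: "'x::finite \<Rightarrow> real"
  assumes z2: "z2 \<in> Simplex"
    and M: "\<And>x. \<bar>g1 x\<bar> \<le> M"
    and K: "\<And>x. \<bar>g1 x - g2 x\<bar> \<le> K * sup_norm (z1 - z2)"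
  shows "\<bar>(\<Sum>x\<in>UNIV. z1 x * g1 x) - (\<Sum>x\<in>UNIV. z2 x * g2 x)\<bar>
     \<le> (real (card (UNIV :: 'x set)) * M + K) * sup_norm (z1 - z2)"
proof -
  let ?s = "sup_norm (z1 - z2)"
  have "\<bar>(\<Sum>x\<in>UNIV. z1 x * g1 x) - (\<Sum>x\<in>UNIV. z2 x * g2 x)\<bar>
     = \<bar>\<Sum>x\<in>UNIV. (z1 x - z2 x) * g1 x + z2 x * (g1 x - g2 x)\<bar>"
    by (simp add: sum_subtractf[symmetric] algebra_simps)
  also have "\<dots> \<le> (\<Sum>x\<in>UNIV. ?s * M + z2 x * (K * ?s))"
  proof (rule order_trans[OF sum_abs sum_mono])
    fix x
    have "\<bar>(z1 x - z2 x) * g1 x\<bar> \<le> ?s * M"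
      unfolding abs_mult using abs_le_sup_norm[of "z1 - z2" x]
      by (intro mult_mono M) (auto simp: sup_norm_nonneg)
    moreover have "\<bar>z2 x * (g1 x - g2 x)\<bar> \<le> z2 x * (K * ?s)"
      using z2 K[of x] by (simp add: Simplex_def abs_mult mult_left_mono)
    ultimately show "\<bar>(z1 x - z2 x) * g1 x + z2 x * (g1 x - g2 x)\<bar>
      \<le> ?s * M + z2 x * (K * ?s)"
      using abs_triangle_ineq[of "(z1 x - z2 x) * g1 x" "z2 x * (g1 x - g2 x)"] by linarith
  qed
  also have "\<dots> = real (card (UNIV :: 'x set)) * ?s * M + (\<Sum>x\<in>UNIV. z2 x) * (K * ?s)"
    by (simp add: sum.distrib sum_distrib_right)
  also have "\<dots> = (real (card (UNIV :: 'x set)) * M + K) * ?s"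
    using z2 by (simp add: Simplex_def algebra_simps)
  finally show ?thesis .
qed

lemma chat_diff_le:
  fixes z1 z2 :: "'x::finite \<Rightarrow> real"
  assumes "z1 \<in> Simplex" "z2 \<in> Simplex"
    and "\<And>x u. sup_lipschitz_on K2 Ibox (l t x u)"
    and "\<And>x u z. z \<in> Ibox \<Longrightarrow> \<bar>l t x u z\<bar> \<le> M"
  shows "\<bar>chat l t z1 \<gamma> - chat l t z2 \<gamma>\<bar>
     \<le> (real (card (UNIV :: 'x set)) * M + K2) * sup_norm (z1 - z2)"
  unfolding chat_def
proof (rule weighted_sum_diff_le)
  have "z1 \<in> Ibox" "z2 \<in> Ibox" using assms(1,2) Simplex_subset_Ibox by auto
  with assms(3,4) show "\<bar>l t x (\<gamma> x) z1\<bar> \<le> M"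
    and "\<bar>l t x (\<gamma> x) z1 - l t x (\<gamma> x) z2\<bar> \<le> K2 * sup_norm (z1 - z2)" for x
    by (auto simp: sup_lipschitz_on_def)
qed fact

lemma fhat_sup_norm_diff_le:
  fixes z1 z2 :: "'x::finite \<Rightarrow> real"
  assumes "\<And>w. 0 \<le> pw t w" "(\<Sum>w\<in>UNIV. pw t w) = 1"
    and "z1 \<in> Simplex" "z2 \<in> Simplex"
    and "\<And>x y u. sup_lipschitz_on K1 Ibox (Ptrans f pw t y x u)"
  shows "sup_norm (fhat f pw t z1 \<gamma> - fhat f pw t z2 \<gamma>)
     \<le> (real (card (UNIV :: 'x set)) + K1) * sup_norm (z1 - z2)"
proof (rule sup_norm_le)
  fix y
  have "z1 \<in> Ibox" "z2 \<in> Ibox" using assms(3,4) Simplex_subset_Ibox by auto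
  moreover have "\<bar>Ptrans f pw t y x u z\<bar> \<le> 1" for x u z
    using Ptrans_nonneg[of pw t f y x u z, OF assms(1)]
      Ptrans_le_1[of pw t f y x u z, OF assms(1,2)]
    by (simp add: abs_le_iff)
  ultimately have "\<bar>fhat f pw t z1 \<gamma> y - fhat f pw t z2 \<gamma> y\<bar>
      \<le> (real (card (UNIV :: 'x set)) * 1 + K1) * sup_norm (z1 - z2)"
    unfolding fhat_def using assms(5)
    by (intro weighted_sum_diff_le[OF assms(4)]) (auto simp: sup_lipschitz_on_def)
  then show "\<bar>(fhat f pw t z1 \<gamma> - fhat f pw t z2 \<gamma>) y\<bar>
      \<le> (real (card (UNIV :: 'x set)) + K1) * sup_norm (z1 - z2)"
    by simp
qed

lemma Bellman_step_sup_lipschitz: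
  fixes f :: "nat \<Rightarrow> 'x::finite \<Rightarrow> 'u::finite \<Rightarrow> 'w::finite \<Rightarrow> ('x \<Rightarrow> real) \<Rightarrow> 'x"
  assumes pw: "\<And>w. 0 \<le> pw t w" "(\<Sum>w\<in>UNIV. pw t w) = 1"
    and K1: "\<And>x y u. sup_lipschitz_on K1 Ibox (Ptrans f pw t y x u)"
    and K2: "\<And>x u. sup_lipschitz_on K2 Ibox (l t x u)"
    and KV: "sup_lipschitz_on KV Simplex V" "0 \<le> KV"
  shows "\<exists>K. sup_lipschitz_on K Simplex
     (\<lambda>z. Min (range (\<lambda>\<gamma>. chat l t z \<gamma> + V (fhat f pw t z \<gamma>))))"
proof -
  define M where "M = (\<Sum>(x, u)\<in>UNIV. \<bar>l t x u (\<lambda>_. 0)\<bar>) + \<bar>K2\<bar>"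
  have M: "\<bar>l t x u z\<bar> \<le> M" if "z \<in> Ibox" for x u z
  proof -
    have "\<bar>l t x u (\<lambda>_. 0)\<bar> \<le> (\<Sum>(x, u)\<in>UNIV. \<bar>l t x u (\<lambda>_. 0)\<bar>)"
      using member_le_sum[of "(x, u)" UNIV "\<lambda>(x, u). \<bar>l t x u (\<lambda>_. 0)\<bar>"] by auto
    with abs_le_if_sup_lipschitz_on_Ibox[OF K2 that, of x u] show ?thesis
      by (simp add: M_def)
  qed
  let ?K = "real (card (UNIV :: 'x set)) * M + K2 + KV * (real (card (UNIV :: 'x set)) + K1)"
  have "\<bar>(chat l t z1 \<gamma> + V (fhat f pw t z1 \<gamma>)) - (chat l t z2 \<gamma> + V (fhat f pw t z2 \<gamma>))\<bar>
      \<le> ?K * sup_norm (z1 - z2)"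
    if z: "z1 \<in> Simplex" "z2 \<in> Simplex" for z1 z2 and \<gamma> :: "'x \<Rightarrow> 'u"
  proof -
    have "\<bar>V (fhat f pw t z1 \<gamma>) - V (fhat f pw t z2 \<gamma>)\<bar>
        \<le> KV * sup_norm (fhat f pw t z1 \<gamma> - fhat f pw t z2 \<gamma>)"
      using KV(1) fhat_in_Simplex[of pw t, OF pw z(1)] fhat_in_Simplex[of pw t, OF pw z(2)]
      unfolding sup_lipschitz_on_def by blast
    also have "\<dots> \<le> KV * ((real (card (UNIV :: 'x set)) + K1) * sup_norm (z1 - z2))"
      using fhat_sup_norm_diff_le[of pw t, OF pw z K1] KV(2) by (rule mult_left_mono)
    finally show ?thesis
      using chat_diff_le[where l = l and t = t and \<gamma> = \<gamma>, OF z K2 M]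
      by (simp add: algebra_simps abs_le_iff)
  qed
  then have "sup_lipschitz_on ?K Simplex
     (\<lambda>z. Min (range (\<lambda>\<gamma>. chat l t z \<gamma> + V (fhat f pw t z \<gamma>))))"
    unfolding sup_lipschitz_on_def by (blast intro: Min_range_diff_le)
  then show ?thesis ..
qed

lemma Vrec_sup_lipschitz:
  fixes f :: "nat \<Rightarrow> 'x::finite \<Rightarrow> 'u::finite \<Rightarrow> 'w::finite \<Rightarrow> ('x \<Rightarrow> real) \<Rightarrow> 'x"
  assumes pw: "\<And>t w. 0 \<le> pw t w" "\<And>t. (\<Sum>w\<in>UNIV. pw t w) = 1"
    and lipschitz: "\<And>t. t \<in> {t0..<t0 + n} \<Longrightarrow> \<exists>K1 K2.
      (\<forall>x y u. sup_lipschitz_on K1 Ibox (Ptrans f pw t y x u)) \<and>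
      (\<forall>x u. sup_lipschitz_on K2 Ibox (l t x u))"
  shows "\<exists>K\<ge>0. sup_lipschitz_on K Simplex (Vrec f pw l n t0)"
  using lipschitz
proof (induction n arbitrary: t0)
  case 0
  show ?case by (auto simp: sup_lipschitz_on_def)
next
  case (Suc n)
  have "\<exists>K\<ge>0. sup_lipschitz_on K Simplex (Vrec f pw l n (Suc t0))"
    by (rule Suc.IH, rule Suc.prems) auto
  then obtain KV where KV: "sup_lipschitz_on KV Simplex (Vrec f pw l n (Suc t0))" "KV \<ge> 0"
    by blast
  obtain K1 K2 where K:
    "\<And>x y u. sup_lipschitz_on K1 Ibox (Ptrans f pw t0 y x u)"
    "\<And>x u. sup_lipschitz_on K2 Ibox (l t0 x u)"
    using Suc.prems[of t0] by auto
  have "\<exists>K. sup_lipschitz_on K Simplex (Vrec f pw l (Suc n) t0)"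
    unfolding Vrec.simps
    by (intro Bellman_step_sup_lipschitz[where ?K1.0 = K1 and ?K2.0 = K2 and KV = KV] pw K KV)
  then obtain K where "sup_lipschitz_on K Simplex (Vrec f pw l (Suc n) t0)" ..
  then have "sup_lipschitz_on (max K 0) Simplex (Vrec f pw l (Suc n) t0)"
    by (rule sup_lipschitz_on_mono) simp
  then show ?case using max.cobounded2 by blast
qed

theorem proposition1:
  fixes T :: nat
    and f :: "nat \<Rightarrow> 'x::finite \<Rightarrow> 'u::finite \<Rightarrow> 'w::finite \<Rightarrow> ('x \<Rightarrow> real) \<Rightarrow> 'x"
    and pw :: "nat \<Rightarrow> 'w \<Rightarrow> real"
    and l :: "nat \<Rightarrow> 'x \<Rightarrow> 'u \<Rightarrow> ('x \<Rightarrow> real) \<Rightarrow> real"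
  assumes pw_nonneg: "\<forall>t w. 0 \<le> pw t w"
    and pw_sum: "\<forall>t. (\<Sum>w\<in>UNIV. pw t w) = 1"
    and l_nonneg: "\<forall>t x u z. z \<in> Ibox \<longrightarrow> 0 \<le> l t x u z"
    and lipschitz: "\<forall>t\<in>{1..T}. \<exists>K1 K2. K1 > 0 \<and> K2 > 0 \<and>
        (\<forall>x y u z1 z2. z1 \<in> Ibox \<longrightarrow> z2 \<in> Ibox \<longrightarrow>
           \<bar>Ptrans f pw t y x u z1 - Ptrans f pw t y x u z2\<bar> \<le> K1 * sup_norm (z1 - z2)) \<and>
        (\<forall>x u z1 z2. z1 \<in> Ibox \<longrightarrow> z2 \<in> Ibox \<longrightarrow>
           \<bar>l t x u z1 - l t x u z2\<bar> \<le> K2 * sup_norm (z1 - z2))"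
  shows "\<forall>t\<in>{1..T}. \<exists>K > 0. \<forall>z1\<in>Simplex. \<forall>z2\<in>Simplex.
           \<bar>Vhat f pw l T t z1 - Vhat f pw l T t z2\<bar> \<le> K * sup_norm (z1 - z2)"
proof
  fix t assume t: "t \<in> {1..T}"
  have "\<exists>K1 K2. (\<forall>x y u. sup_lipschitz_on K1 Ibox (Ptrans f pw s y x u)) \<and>
      (\<forall>x u. sup_lipschitz_on K2 Ibox (l s x u))" if "s \<in> {t..<t + (T + 1 - t)}" for s
  proof -
    from that t have "s \<in> {1..T}" by auto
    with lipschitz obtain K1 K2 where
      "\<forall>x y u z1 z2. z1 \<in> Ibox \<longrightarrow> z2 \<in> Ibox \<longrightarrow>
         \<bar>Ptrans f pw s y x u z1 - Ptrans f pw s y x u z2\<bar> \<le> K1 * sup_norm (z1 - z2)"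
      "\<forall>x u z1 z2. z1 \<in> Ibox \<longrightarrow> z2 \<in> Ibox \<longrightarrow>
         \<bar>l s x u z1 - l s x u z2\<bar> \<le> K2 * sup_norm (z1 - z2)"
      by blast
    then show ?thesis unfolding sup_lipschitz_on_def by blast
  qed
  then have "\<exists>K\<ge>0. sup_lipschitz_on K Simplex (Vhat f pw l T t)"
    unfolding Vhat_def using pw_nonneg pw_sum by (intro Vrec_sup_lipschitz) auto
  then obtain K where "K \<ge> 0" and K: "sup_lipschitz_on K Simplex (Vhat f pw l T t)"
    by blast
  from K have "sup_lipschitz_on (K + 1) Simplex (Vhat f pw l T t)"
    by (rule sup_lipschitz_on_mono) simp
  with \<open>K \<ge> 0\<close> show "\<exists>K > 0. \<forall>z1\<in>Simplex. \<forall>z2\<in>Simplex.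
      \<bar>Vhat f pw l T t z1 - Vhat f pw l T t z2\<bar> \<le> K * sup_norm (z1 - z2)"
    unfolding sup_lipschitz_on_def by (intro exI[of _ "K + 1"]) auto
qed

end
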